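(* For each integer $n\geq 2$, the Johnson graph $J(n,2)$ satisfies $\operatorname{tww}(J(n,2))=\operatorname{lb}_1(J(n,2))$, and this value equals $2(n-3)$ if $n\geq 5$ and $0$ otherwise.
   Context: All graphs are finite and simple. The Johnson graph $J(n,2)$ has vertex set the 2-element subsets of $\{1,\dots,n\}$, two vertices $S,S'$ being adjacent iff $|S\cap S'|=1$. A trigraph is a graph whose edges are each colored red or black; a graph is viewed as a trigraph with all edges black; the red degree of a vertex is the number of red edges incident to it. For a partition $\mathcal{P}$ of $V(G)$, the quotient trigraph $G/\mathcal{P}$ has vertex set $\mathcal{P}$; two distinct parts $U,W$ are joined by a black edge if every pair $\{u,w\}$ with $u\in U,w\in W$ is a black edge of $G$, are non-adjacent if no such pair is an edge, and are joined by a red edge otherwise. A contraction sequence of an $N$-vertex trigraph $G$ is a sequence $\mathcal{P}_N,\dots,\mathcal{P}_1$ of partitions of $V(G)$ where $\mathcal{P}_N$ is the partition into singletons and each $\mathcal{P}_i$ arises from $\mathcal{P}_{i+1}$ by merging two parts; its width is the maximum red degree over all $G/\mathcal{P}_i$, and $\operatorname{tww}(G)$ is the minimum width of a contraction sequence. For $|V(G)|\geq 2$, $\operatorname{lb}_1(G)$ is the minimum over all 2-element subsets $\{u,v\}\subseteq V(G)$ of the maximum red degree of $G/\mathcal{P}$ where $\mathcal{P}$ has $\{u,v\}$ as its only non-singleton part; $\operatorname{lb}_1(G)=0$ if $|V(G)|=1$. *)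

theory Defs
  imports Main "HOL-Library.Disjoint_Sets"
begin

text \<open>A trigraph is given by a finite vertex set V, a set B of black edges and a set R
  of red edges; edges are 2-element subsets of V (B and R disjoint).
  A graph (V, E) is the trigraph (V, E, {}).\<close>

definition quot_red_adj :: "'a set set \<Rightarrow> 'a set set \<Rightarrow> 'a set set \<Rightarrow> 'a set \<Rightarrow> 'a set \<Rightarrow> bool" where
  "quot_red_adj B R P U W \<longleftrightarrow>
     U \<in> P \<and> W \<in> P \<and> U \<noteq> W \<and>
     \<not> (\<forall>u\<in>U. \<forall>w\<in>W. {u, w} \<in> B) \<and>
     (\<exists>u\<in>U. \<exists>w\<in>W. {u, w} \<in> B \<union> R)"

definition quot_red_deg :: "'a set set \<Rightarrow> 'a set set \<Rightarrow> 'a set set \<Rightarrow> 'a set \<Rightarrow> nat" where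
  "quot_red_deg B R P U = card {W. quot_red_adj B R P U W}"

definition max_red_deg :: "'a set set \<Rightarrow> 'a set set \<Rightarrow> 'a set set \<Rightarrow> nat" where
  "max_red_deg B R P = Max (insert 0 ((quot_red_deg B R P) ` P))"

definition singleton_partition :: "'a set \<Rightarrow> 'a set set" where
  "singleton_partition V = (\<lambda>x. {x}) ` V"

definition merge_step :: "'a set set \<Rightarrow> 'a set set \<Rightarrow> bool" where
  "merge_step P Q \<longleftrightarrow>
     (\<exists>U\<in>P. \<exists>W\<in>P. U \<noteq> W \<and> Q = insert (U \<union> W) (P - {U, W}))"

text \<open>A contraction sequence of an N-vertex trigraph with vertex set V, written as a list
  [P_N, P_{N-1}, ..., P_1] of partitions of V.\<close>
definition contraction_seq :: "'a set \<Rightarrow> 'a set set list \<Rightarrow> bool" where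
  "contraction_seq V ps \<longleftrightarrow>
     length ps = card V \<and>
     (\<forall>P \<in> set ps. partition_on V P) \<and>
     ps ! 0 = singleton_partition V \<and>
     (\<forall>i. Suc i < length ps \<longrightarrow> merge_step (ps ! i) (ps ! Suc i))"

definition seq_width :: "'a set set \<Rightarrow> 'a set set \<Rightarrow> 'a set set list \<Rightarrow> nat" where
  "seq_width B R ps = Max (insert 0 (max_red_deg B R ` set ps))"

definition tww :: "'a set \<Rightarrow> 'a set set \<Rightarrow> 'a set set \<Rightarrow> nat" where
  "tww V B R = (LEAST w. \<exists>ps. contraction_seq V ps \<and> seq_width B R ps = w)"

definition pair_partition :: "'a set \<Rightarrow> 'a \<Rightarrow> 'a \<Rightarrow> 'a set set" where
  "pair_partition V u v = insert {u, v} ((\<lambda>x. {x}) ` (V - {u, v}))"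

definition lb1 :: "'a set \<Rightarrow> 'a set set \<Rightarrow> 'a set set \<Rightarrow> nat" where
  "lb1 V B R = (if card V \<le> 1 then 0 else
     Min {max_red_deg B R (pair_partition V u v) | u v. u \<in> V \<and> v \<in> V \<and> u \<noteq> v})"

definition johnson_V :: "nat \<Rightarrow> nat set set" where
  "johnson_V n = {S. S \<subseteq> {1..n} \<and> card S = 2}"

definition johnson_E :: "nat \<Rightarrow> nat set set set" where
  "johnson_E n = {{S, S'} | S S'. S \<in> johnson_V n \<and> S' \<in> johnson_V n \<and> card (S \<inter> S') = 1}"

end

theory Submission
  imports Defs
begin

text \<open>
  Lower bound: merging two distinct vertices u, v of J(n,2) produces a red edge to every vertex
  {p, t} with p in the symmetric difference of u and v and t outside u \<union> v, and there are at
  least 2(n - 3) such vertices when n \<ge> 5. The first step of any contraction sequence is such a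
  merge, so lb1 \<le> tww.

  Upper bound: the vertices are absorbed from the top. For x running down from n - 1, the pairs
  above x are grouped into a star for each smaller element below x, a pivot part for x and a top
  part; the pairs {a, x} then join their stars one by one, after which pivot and top are merged.
  In every intermediate quotient a part has red edges only to stars, to pairs {a, x} not yet
  absorbed, to the pivot and to the top part, and there are at most 2(n - 3) of these.
  For n \<le> 4 the graph is a vertex, a triangle or an octahedron, and these have contraction
  sequences without red edges.
\<close>

section \<open>Partitions given by labellings\<close>

definition label_class :: "'a set \<Rightarrow> ('a \<Rightarrow> 'b) \<Rightarrow> 'a \<Rightarrow> 'a set" where
  "label_class V f u = {v \<in> V. f v = f u}"

definition label_partition :: "'a set \<Rightarrow> ('a \<Rightarrow> 'b) \<Rightarrow> 'a set set" where
  "label_partition V f = label_class V f ` V"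

lemma partition_on_label_partition: "partition_on V (label_partition V f)"
proof (rule partition_onI)
  show "\<Union> (label_partition V f) = V" "{} \<notin> label_partition V f"
    unfolding label_partition_def label_class_def by auto
  show "disjnt p q" if "p \<in> label_partition V f" "q \<in> label_partition V f" "p \<noteq> q" for p q
    using that unfolding label_partition_def label_class_def disjnt_def by auto
qed

lemma finite_label_partition: "finite V \<Longrightarrow> finite (label_partition V f)"
  unfolding label_partition_def by simp

lemma label_class_eq_iff:
  assumes "u \<in> V"
  shows "label_class V f u = label_class V f w \<longleftrightarrow> f u = f w"
proof
  assume "label_class V f u = label_class V f w"
  moreover have "u \<in> label_class V f u" using \<open>u \<in> V\<close> by (simp add: label_class_def)
  ultimately show "f u = f w" by (simp add: label_class_def)
qed (simp add: label_class_def)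

lemma label_partition_eq_singleton_partition:
  "inj_on f V \<Longrightarrow> label_partition V f = singleton_partition V"
  unfolding label_partition_def singleton_partition_def label_class_def inj_on_def
  by (intro image_cong) auto

lemma label_partition_eq_single:
  "V \<noteq> {} \<Longrightarrow> (\<And>u v. u \<in> V \<Longrightarrow> v \<in> V \<Longrightarrow> f u = f v) \<Longrightarrow> label_partition V f = {V}"
  unfolding label_partition_def label_class_def by blast

lemma merge_stepI:
  "U \<in> P \<Longrightarrow> W \<in> P \<Longrightarrow> U \<noteq> W \<Longrightarrow> Q = insert (U \<union> W) (P - {U, W}) \<Longrightarrow> merge_step P Q"
  unfolding merge_step_def by blast

lemma merge_step_label_partition:
  assumes a: "a \<in> V" and b: "b \<in> V" and ab: "f a \<noteq> f b"
    and g: "\<And>u v. u \<in> V \<Longrightarrow> v \<in> V \<Longrightarrow> g u = g v \<longleftrightarrow> f u = f v \<or> {f u, f v} = {f a, f b}"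
  shows "merge_step (label_partition V f) (label_partition V g)"
proof -
  let ?U = "label_class V f a" and ?W = "label_class V f b"
  have g_class: "label_class V g u =
      (if f u = f a \<or> f u = f b then ?U \<union> ?W else label_class V f u)" if "u \<in> V" for u
    using g[OF _ that] ab unfolding label_class_def by (auto simp: doubleton_eq_iff)
  let ?h = "\<lambda>u. if f u = f a \<or> f u = f b then ?U \<union> ?W else label_class V f u"
  have "label_partition V g = ?h ` V"
    unfolding label_partition_def by (rule image_cong) (simp_all add: g_class)
  also have "\<dots> = insert (?U \<union> ?W) (label_partition V f - {?U, ?W})"
  proof (intro equalityI subsetI)
    fix Z assume "Z \<in> ?h ` V"
    then obtain u where "u \<in> V" "Z = ?h u" by blast
    then show "Z \<in> insert (?U \<union> ?W) (label_partition V f - {?U, ?W})"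
      using label_class_eq_iff[of _ V f a] label_class_eq_iff[of _ V f b]
      by (auto simp: label_partition_def)
  next
    fix Z assume "Z \<in> insert (?U \<union> ?W) (label_partition V f - {?U, ?W})"
    then consider "Z = ?U \<union> ?W" | u where "u \<in> V" "Z = label_class V f u" "Z \<noteq> ?U" "Z \<noteq> ?W"
      unfolding label_partition_def by blast
    then show "Z \<in> ?h ` V"
    proof cases
      case 1
      then show ?thesis using a by force
    next
      case 2
      then show ?thesis
        using label_class_eq_iff[OF 2(1), of f a] label_class_eq_iff[OF 2(1), of f b] by force
    qed
  qed
  finally show ?thesis
    using a b ab by (intro merge_stepI) (auto simp: label_partition_def label_class_eq_iff)
qed

lemma merge_step_label_partition_comp:
  assumes "a \<in> V" "b \<in> V" "f a \<noteq> f b" "\<And>u. u \<in> V \<Longrightarrow> g u = h (f u)"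
    and "\<And>p q. h p = h q \<longleftrightarrow> p = q \<or> {p, q} = {f a, f b}"
  shows "merge_step (label_partition V f) (label_partition V g)"
  by (rule merge_step_label_partition) (simp_all add: assms)

section \<open>Red degrees of quotient graphs\<close>

lemma quot_red_deg_label_partition_le:
  assumes "finite L" and u: "u \<in> V"
    and red: "\<And>u1 u2 w1 w2. \<lbrakk>u1 \<in> V; u2 \<in> V; w1 \<in> V; w2 \<in> V; f u1 = f u; f u2 = f u;
       f w1 = f w2; f w1 \<noteq> f u; {u1, w1} \<in> B; {u2, w2} \<notin> B\<rbrakk> \<Longrightarrow> f w1 \<in> L"
  shows "quot_red_deg B {} (label_partition V f) (label_class V f u) \<le> card L"
proof -
  let ?P = "label_partition V f"
  have "{W. quot_red_adj B {} ?P (label_class V f u) W} \<subseteq> (\<lambda>l. {v \<in> V. f v = l}) ` L"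
  proof
    fix W assume "W \<in> {W. quot_red_adj B {} ?P (label_class V f u) W}"
    then have red_UW: "quot_red_adj B {} ?P (label_class V f u) W" by simp
    then obtain w where w: "w \<in> V" "W = label_class V f w"
      unfolding quot_red_adj_def label_partition_def by blast
    have "f w \<noteq> f u"
      using red_UW w label_class_eq_iff[OF u, of f w] unfolding quot_red_adj_def by auto
    moreover obtain u1 w1 u2 w2 where "u1 \<in> label_class V f u" "w1 \<in> W" "{u1, w1} \<in> B"
        "u2 \<in> label_class V f u" "w2 \<in> W" "{u2, w2} \<notin> B"
      using red_UW unfolding quot_red_adj_def by blast
    ultimately have "f w1 \<in> L" and "f w1 = f w"
      using red[of u1 u2 w1 w2] w unfolding label_class_def by auto
    then show "W \<in> (\<lambda>l. {v \<in> V. f v = l}) ` L" using w unfolding label_class_def by auto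
  qed
  then have "quot_red_deg B {} ?P (label_class V f u) \<le> card ((\<lambda>l. {v \<in> V. f v = l}) ` L)"
    unfolding quot_red_deg_def using \<open>finite L\<close> by (intro card_mono) auto
  also have "\<dots> \<le> card L" using \<open>finite L\<close> by (rule card_image_le)
  finally show ?thesis .
qed

lemma max_red_deg_le:
  "finite P \<Longrightarrow> (\<And>U. U \<in> P \<Longrightarrow> quot_red_deg B R P U \<le> w) \<Longrightarrow> max_red_deg B R P \<le> w"
  unfolding max_red_deg_def by simp

lemma quot_red_deg_le_max_red_deg:
  "finite P \<Longrightarrow> U \<in> P \<Longrightarrow> quot_red_deg B R P U \<le> max_red_deg B R P"
  unfolding max_red_deg_def by (rule Max_ge) auto

lemma max_red_deg_single: "max_red_deg B R {V} = 0"
  unfolding max_red_deg_def quot_red_deg_def quot_red_adj_def by simp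

lemma max_red_deg_eq_0:
  assumes P: "partition_on V P"
    and parts: "\<And>U. U \<in> P \<Longrightarrow> is_singleton U \<or> (\<forall>u\<in>U. \<forall>w\<in>V - U. {u, w} \<in> B)"
  shows "max_red_deg B {} P = 0"
proof -
  have no_red: "\<not> quot_red_adj B {} P U W" for U W
  proof
    assume red: "quot_red_adj B {} P U W"
    then have UW: "U \<in> P" "W \<in> P" "U \<noteq> W" unfolding quot_red_adj_def by auto
    then have WU: "W \<subseteq> V - U" and UW': "U \<subseteq> V - W"
      using P unfolding partition_on_def disjoint_def by auto
    consider "is_singleton U" "is_singleton W" | "\<forall>u\<in>U. \<forall>w\<in>V - U. {u, w} \<in> B"
      | "\<forall>w\<in>W. \<forall>u\<in>V - W. {w, u} \<in> B"
      using parts[OF UW(1)] parts[OF UW(2)] by blast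
    then have "(\<forall>u\<in>U. \<forall>w\<in>W. {u, w} \<in> B) \<or> (\<forall>u\<in>U. \<forall>w\<in>W. {u, w} \<notin> B)"
    proof cases
      case 1
      then show ?thesis by (auto simp: is_singleton_def)
    next
      case 2
      then show ?thesis using WU by blast
    next
      case 3
      have "{u, w} \<in> B" if "u \<in> U" "w \<in> W" for u w
      proof -
        have "{w, u} \<in> B" using 3 UW' that by blast
        then show ?thesis by (simp add: insert_commute)
      qed
      then show ?thesis by blast
    qed
    then show False using red unfolding quot_red_adj_def by auto
  qed
  then have "quot_red_deg B {} P U = 0" for U
    unfolding quot_red_deg_def by (metis card.empty empty_Collect_eq)
  then show ?thesis unfolding max_red_deg_def by (simp add: image_constant_conv)
qed

lemma card_distinguishing_le_quot_red_deg:
  assumes "finite V"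
  shows "card {w \<in> V - {u, v}. ({u, w} \<in> B) \<noteq> ({v, w} \<in> B)}
    \<le> quot_red_deg B {} (pair_partition V u v) {u, v}"
proof -
  let ?P = "pair_partition V u v" and ?D = "{w \<in> V - {u, v}. ({u, w} \<in> B) \<noteq> ({v, w} \<in> B)}"
  have "finite {W. quot_red_adj B {} ?P {u, v} W}"
    by (rule finite_subset[of _ ?P]) (auto simp: quot_red_adj_def pair_partition_def assms)
  moreover have "(\<lambda>w. {w}) ` ?D \<subseteq> {W. quot_red_adj B {} ?P {u, v} W}"
    unfolding quot_red_adj_def pair_partition_def by (auto simp: doubleton_eq_iff)
  ultimately have "card ((\<lambda>w. {w}) ` ?D) \<le> quot_red_deg B {} ?P {u, v}"
    unfolding quot_red_deg_def by (rule card_mono)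
  then show ?thesis by (simp add: card_image)
qed

section \<open>Contraction sequences\<close>

lemma partition_on_merge_step:
  assumes P: "partition_on V P" and "merge_step P Q"
  shows "partition_on V Q"
proof -
  obtain U W where UW: "U \<in> P" "W \<in> P" "U \<noteq> W" and Q: "Q = insert (U \<union> W) (P - {U, W})"
    using \<open>merge_step P Q\<close> unfolding merge_step_def by blast
  have disj: "X \<inter> Y = {}" if "X \<in> P" "Y \<in> P" "X \<noteq> Y" for X Y
    using P that unfolding partition_on_def disjoint_def by blast
  show ?thesis
  proof (rule partition_onI)
    show "\<Union> Q = V" "{} \<notin> Q"
      using partition_onD1[OF P] partition_onD3[OF P] UW unfolding Q by auto
    show "disjnt X Y" if "X \<in> Q" "Y \<in> Q" "X \<noteq> Y" for X Y
      using that disj UW unfolding Q disjnt_def by auto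
  qed
qed

lemma contraction_seqI:
  assumes "ps \<noteq> []" "hd ps = singleton_partition V" "successively merge_step ps"
    and "length ps = card V"
  shows "contraction_seq V ps"
proof -
  have "partition_on V (ps ! i)" if "i < length ps" for i
    using that
  proof (induction i)
    case 0
    then show ?case
      using assms(1,2) by (simp add: hd_conv_nth singleton_partition_def partition_on_singletons)
  next
    case (Suc i)
    then show ?case using successively_nth[OF assms(3)] by (auto intro: partition_on_merge_step)
  qed
  then show ?thesis
    using assms unfolding contraction_seq_def
    by (auto simp: in_set_conv_nth hd_conv_nth successively_conv_nth)
qed

lemma tww_le: "contraction_seq V ps \<Longrightarrow> tww V B R \<le> seq_width B R ps"
  unfolding tww_def by (rule Least_le) blast

lemma contraction_seq_second_eq_pair_partition:
  assumes cs: "contraction_seq V ps" and "2 \<le> card V"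
  obtains u v where "u \<in> V" "v \<in> V" "u \<noteq> v" "ps ! 1 = pair_partition V u v"
proof -
  have "Suc 0 < length ps" using assms unfolding contraction_seq_def by simp
  then have "merge_step (ps ! 0) (ps ! Suc 0)" using cs unfolding contraction_seq_def by blast
  then obtain u v where "u \<in> V" "v \<in> V" "u \<noteq> v"
      "ps ! 1 = insert ({u} \<union> {v}) (singleton_partition V - {{u}, {v}})"
    using cs unfolding contraction_seq_def merge_step_def singleton_partition_def by auto
  moreover have "singleton_partition V - {{u}, {v}} = (\<lambda>x. {x}) ` (V - {u, v})"
    unfolding singleton_partition_def by auto
  ultimately show ?thesis
    using that unfolding pair_partition_def by (metis insert_is_Un insert_commute)
qed

lemma finite_pair_partition_degrees:
  "finite V \<Longrightarrow> finite {max_red_deg B R (pair_partition V u v) |u v. u \<in> V \<and> v \<in> V \<and> u \<noteq> v}"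
  by (auto intro: finite_subset[of _ "(\<lambda>(u, v). max_red_deg B R (pair_partition V u v)) ` (V \<times> V)"])

lemma lb1_geI:
  assumes "finite V" "2 \<le> card V"
    and bound: "\<And>u v. u \<in> V \<Longrightarrow> v \<in> V \<Longrightarrow> u \<noteq> v \<Longrightarrow> k \<le> max_red_deg B R (pair_partition V u v)"
  shows "k \<le> lb1 V B R"
proof -
  have "\<exists>u\<in>V. \<exists>v\<in>V. u \<noteq> v" using assms(2) card_le_Suc0_iff_eq[OF assms(1)] by auto
  then have "{max_red_deg B R (pair_partition V u v) |u v. u \<in> V \<and> v \<in> V \<and> u \<noteq> v} \<noteq> {}"
    by blast
  then have "k \<le> Min {max_red_deg B R (pair_partition V u v) |u v. u \<in> V \<and> v \<in> V \<and> u \<noteq> v}"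
    using finite_pair_partition_degrees[OF assms(1)] bound by (intro Min.boundedI) auto
  then show ?thesis using assms(2) unfolding lb1_def by simp
qed

lemma lb1_le_seq_width:
  assumes "finite V" and cs: "contraction_seq V ps"
  shows "lb1 V B R \<le> seq_width B R ps"
proof (cases "2 \<le> card V")
  case True
  then obtain u v where uv: "u \<in> V" "v \<in> V" "u \<noteq> v" "ps ! 1 = pair_partition V u v"
    using contraction_seq_second_eq_pair_partition[OF cs] by blast
  have "lb1 V B R \<le> max_red_deg B R (ps ! 1)"
    unfolding lb1_def uv(4) using True uv finite_pair_partition_degrees[OF \<open>finite V\<close>]
    by (auto intro: Min_le)
  also have "\<dots> \<le> seq_width B R ps"
    using cs True unfolding seq_width_def contraction_seq_def by (intro Max_ge) auto
  finally show ?thesis .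
qed (simp add: lb1_def)

lemma lb1_le_tww:
  assumes "finite V" and "contraction_seq V ps"
  shows "lb1 V B R \<le> tww V B R"
proof -
  obtain qs where "contraction_seq V qs" "seq_width B R qs = tww V B R"
    using LeastI_ex[of "\<lambda>w. \<exists>ps. contraction_seq V ps \<and> seq_width B R ps = w"] assms(2)
    unfolding tww_def by blast
  then show ?thesis using lb1_le_seq_width[OF assms(1)] by metis
qed

section \<open>The Johnson graph\<close>

lemma mem_johnson_V_iff:
  "v \<in> johnson_V n \<longleftrightarrow> (\<exists>a b. v = {a, b} \<and> 1 \<le> a \<and> a < b \<and> b \<le> n)"
proof
  assume "v \<in> johnson_V n"
  then have "v \<subseteq> {1..n}" and "card v = 2" unfolding johnson_V_def by auto
  then obtain x y where xy: "v = {x, y}" "x < y" "x \<in> {1..n}" "y \<in> {1..n}"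
    unfolding card_2_iff by (metis insert_commute insert_subset linorder_neqE_nat)
  then show "\<exists>a b. v = {a, b} \<and> 1 \<le> a \<and> a < b \<and> b \<le> n" by auto
qed (auto simp: johnson_V_def)

lemma doubleton_mem_johnson_V: "1 \<le> a \<Longrightarrow> a < b \<Longrightarrow> b \<le> n \<Longrightarrow> {a, b} \<in> johnson_V n"
  unfolding mem_johnson_V_iff by blast

lemma finite_johnson_V: "finite (johnson_V n)"
  unfolding johnson_V_def by (rule finite_subset[of _ "Pow {1..n}"]) auto

lemma card_johnson_V: "card (johnson_V n) = n choose 2"
  unfolding johnson_V_def using n_subsets[of "{1..n}" 2] by simp

lemma doubleton_mem_johnson_E_iff:
  "{u, w} \<in> johnson_E n \<longleftrightarrow> u \<in> johnson_V n \<and> w \<in> johnson_V n \<and> card (u \<inter> w) = 1"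
  unfolding johnson_E_def by (auto simp: doubleton_eq_iff Int_commute)

definition pair_adj :: "nat \<Rightarrow> nat \<Rightarrow> nat \<Rightarrow> nat \<Rightarrow> bool" where
  "pair_adj a b c d \<longleftrightarrow> (a = c \<or> a = d \<or> b = c \<or> b = d) \<and> \<not> (a = c \<and> b = d)"

lemma doubletons_mem_johnson_E_iff_pair_adj:
  assumes "{a, b} \<in> johnson_V n" "{c, d} \<in> johnson_V n" "a < b" "c < d"
  shows "{{a, b}, {c, d}} \<in> johnson_E n \<longleftrightarrow> pair_adj a b c d"
  using assms unfolding doubleton_mem_johnson_E_iff pair_adj_def
  by (cases "a = c"; cases "a = d"; cases "b = c"; cases "b = d")
    (auto simp: Int_insert_left Int_insert_right)

lemma card_symdiff_mult_card_outside_ge: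
  assumes "5 \<le> n" "u \<in> johnson_V n" "v \<in> johnson_V n" "u \<noteq> v"
  shows "2 * (n - 3) \<le> card (sym_diff u v) * card ({1..n} - (u \<union> v))"
proof -
  have u: "u \<subseteq> {1..n}" "card u = 2" "finite u" and v: "v \<subseteq> {1..n}" "card v = 2" "finite v"
    using assms(2,3) unfolding johnson_V_def by (auto intro: finite_subset)
  define k where "k = card (u \<inter> v)"
  have "k \<le> 2" using card_mono[OF u(3), of "u \<inter> v"] u unfolding k_def by simp
  moreover have "k \<noteq> 2"
  proof
    assume "k = 2"
    then have "u \<inter> v = u" "u \<inter> v = v"
      using card_subset_eq[OF u(3), of "u \<inter> v"] card_subset_eq[OF v(3), of "u \<inter> v"] u v
      unfolding k_def by auto
    then show False using \<open>u \<noteq> v\<close> by simp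
  qed
  ultimately have k: "k \<le> 1" by simp
  have "card (u - v) = 2 - k" "card (v - u) = 2 - k"
    using card_Diff_subset_Int[of u v] card_Diff_subset_Int[of v u] u v
    unfolding k_def by (simp_all add: Int_commute)
  then have sym: "card (sym_diff u v) = 4 - 2 * k"
    using u v k by (subst card_Un_disjoint) auto
  have "card (u \<union> v) = 4 - k" using card_Un_Int[OF u(3) v(3)] u v k unfolding k_def by simp
  then have out: "card ({1..n} - (u \<union> v)) = n - (4 - k)"
    using u v by (subst card_Diff_subset) auto
  show ?thesis using k assms(1) unfolding sym out by (cases k) auto
qed

lemma card_johnson_distinguishing_ge:
  assumes "5 \<le> n" "u \<in> johnson_V n" "v \<in> johnson_V n" "u \<noteq> v"
  shows "2 * (n - 3)
    \<le> card {w \<in> johnson_V n - {u, v}. ({u, w} \<in> johnson_E n) \<noteq> ({v, w} \<in> johnson_E n)}"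
    (is "_ \<le> card ?D")
proof -
  let ?S = "sym_diff u v" and ?T = "{1..n} - (u \<union> v)" and ?pair = "\<lambda>(p, t). {p, t}"
  have "inj_on ?pair (?S \<times> ?T)"
    unfolding inj_on_def by (auto simp: doubleton_eq_iff)
  then have "card (?S \<times> ?T) = card (?pair ` (?S \<times> ?T))" by (rule card_image[symmetric])
  also have "\<dots> \<le> card ?D"
  proof (rule card_mono)
    show "finite ?D" using finite_johnson_V by simp
    have uv: "u \<subseteq> {1..n}" "v \<subseteq> {1..n}" using assms(2,3) unfolding johnson_V_def by auto
    show "?pair ` (?S \<times> ?T) \<subseteq> ?D"
    proof
      fix w assume "w \<in> ?pair ` (?S \<times> ?T)"
      then obtain p t where p: "p \<in> ?S" and t: "t \<in> ?T" and w_eq: "w = {p, t}" by blast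
      then have "p \<in> {1..n}" "p \<noteq> t" using uv by auto
      then have w: "{p, t} \<in> johnson_V n" using t unfolding johnson_V_def by auto
      have "{p, t} \<noteq> u" "{p, t} \<noteq> v" using t by auto
      moreover consider "p \<in> u" "p \<notin> v" | "p \<in> v" "p \<notin> u" using p by auto
      then have "card (u \<inter> {p, t}) = 1 \<longleftrightarrow> card (v \<inter> {p, t}) \<noteq> 1"
      proof cases
        case 1
        then have "u \<inter> {p, t} = {p}" "v \<inter> {p, t} = {}" using t by auto
        then show ?thesis by simp
      next
        case 2
        then have "u \<inter> {p, t} = {}" "v \<inter> {p, t} = {p}" using t by auto
        then show ?thesis by simp
      qed
      ultimately show "w \<in> ?D"
        using w assms(2,3) unfolding w_eq by (simp add: doubleton_mem_johnson_E_iff)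
    qed
  qed
  finally show ?thesis
    using card_symdiff_mult_card_outside_ge[OF assms] by (simp add: card_cartesian_product)
qed

lemma lb1_johnson_ge:
  assumes "5 \<le> n"
  shows "2 * (n - 3) \<le> lb1 (johnson_V n) (johnson_E n) {}"
proof (rule lb1_geI[OF finite_johnson_V])
  have "2 * 2 \<le> n * (n - 1)" using assms by (intro mult_le_mono) auto
  then show "2 \<le> card (johnson_V n)" unfolding card_johnson_V choose_two by presburger
  fix u v assume uv: "u \<in> johnson_V n" "v \<in> johnson_V n" "u \<noteq> v"
  have "2 * (n - 3) \<le> quot_red_deg (johnson_E n) {} (pair_partition (johnson_V n) u v) {u, v}"
    using card_johnson_distinguishing_ge[OF assms uv]
      card_distinguishing_le_quot_red_deg[OF finite_johnson_V] by (rule order.trans)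
  also have "\<dots> \<le> max_red_deg (johnson_E n) {} (pair_partition (johnson_V n) u v)"
    by (rule quot_red_deg_le_max_red_deg) (auto simp: pair_partition_def finite_johnson_V)
  finally show "2 * (n - 3) \<le> max_red_deg (johnson_E n) {} (pair_partition (johnson_V n) u v)" .
qed

section \<open>A contraction sequence of width 2(n - 3)\<close>

text \<open>
  The stage (x, m) of the construction labels a pair {a, b} with a < b by a cell: pairs below x
  are untouched singletons (Fixed a b); a pair {a, b} with b > x lies in the star of a if a < x,
  in the pivot part if a = x, and in the top part if a > x; a pair {a, x} has joined the star of
  a if a < m and is otherwise still a singleton (Loose a).
\<close>

datatype cell = Fixed nat nat | Star nat | Loose nat | Pivot | Top

definition cell_of :: "nat \<Rightarrow> nat \<Rightarrow> nat \<Rightarrow> nat \<Rightarrow> cell" where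
  "cell_of x m a b =
     (if b < x then Fixed a b
      else if b = x then (if a < m then Star a else Loose a)
      else if a < x then Star a else if a = x then Pivot else Top)"

lemma cell_of_eq_Fixed_iff: "cell_of x m a b = Fixed i j \<longleftrightarrow> b < x \<and> a = i \<and> b = j"
  unfolding cell_of_def by auto

lemma cell_of_eq_Star_iff:
  "cell_of x m a b = Star i \<longleftrightarrow> a = i \<and> (b = x \<and> a < m \<or> x < b \<and> a < x)"
  unfolding cell_of_def by auto

lemma cell_of_eq_Loose_iff: "cell_of x m a b = Loose i \<longleftrightarrow> a = i \<and> b = x \<and> m \<le> a"
  unfolding cell_of_def by auto

lemma cell_of_eq_Pivot_iff: "cell_of x m a b = Pivot \<longleftrightarrow> a = x \<and> x < b"
  unfolding cell_of_def by auto

lemma cell_of_eq_Top_iff: "cell_of x m a b = Top \<longleftrightarrow> x < a \<and> x < b"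
  unfolding cell_of_def by auto

lemmas cell_of_eq_iff = cell_of_eq_Fixed_iff cell_of_eq_Star_iff cell_of_eq_Loose_iff
  cell_of_eq_Pivot_iff cell_of_eq_Top_iff

definition red_cells :: "nat \<Rightarrow> nat \<Rightarrow> nat \<Rightarrow> cell \<Rightarrow> cell set" where
  "red_cells n x m c = (case c of
       Fixed a b \<Rightarrow> {}
     | Loose k \<Rightarrow> Star ` {1..<m}
     | Star i \<Rightarrow> (if i < m then Loose ` {m..<x} else {}) \<union> Star ` ({1..<x} - {i})
                 \<union> (if x + 1 < n then {Pivot, Top} else {})
     | Pivot \<Rightarrow> insert Top (Star ` {1..<x})
     | Top \<Rightarrow> insert Pivot (Star ` {1..<x}))"

lemma finite_red_cells: "finite (red_cells n x m c)"
  unfolding red_cells_def by (cases c) auto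

lemma mixed_adjacency_in_red_cells:
  assumes "1 \<le> m" "m \<le> x" "x < n"
    and "1 \<le> a1" "a1 < b1" "b1 \<le> n" "1 \<le> a2" "a2 < b2" "b2 \<le> n"
    and "1 \<le> c1" "c1 < d1" "d1 \<le> n" "1 \<le> c2" "c2 < d2" "d2 \<le> n"
    and "cell_of x m a1 b1 = C" "cell_of x m a2 b2 = C"
    and "cell_of x m c1 d1 = D" "cell_of x m c2 d2 = D"
    and "C \<noteq> D" "pair_adj a1 b1 c1 d1" "\<not> pair_adj a2 b2 c2 d2"
  shows "D \<in> red_cells n x m C"
  \<comment> \<open>Case analysis over all pairs of cells: outside red_cells, adjacency is decided by the cells.\<close>
  using assms
  by (cases C; cases D; clarsimp simp: cell_of_eq_iff red_cells_def image_iff pair_adj_def;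
      linarith?; auto)

lemma card_red_cells_le:
  assumes "5 \<le> n" "1 \<le> m" "m \<le> x" "x < n" "1 \<le> a" "a < b" "b \<le> n"
  shows "card (red_cells n x m (cell_of x m a b)) \<le> 2 * (n - 3)"
proof -
  have stars: "card (Star ` S) \<le> card S" if "finite S" for S
    using that by (rule card_image_le)
  have ins: "card (insert c (Star ` {1..<x})) \<le> x" for c
    using stars[of "{1..<x}"] assms by (auto simp: card_insert_if)
  show ?thesis
  proof (cases "cell_of x m a b")
    case (Loose k)
    then show ?thesis using stars[of "{1..<m}"] assms by (simp add: red_cells_def)
  next
    case (Star i)
    then have i: "1 \<le> i" "i < x" using assms by (auto simp: cell_of_eq_iff)
    have "card (red_cells n x m (Star i))
        \<le> card (if i < m then Loose ` {m..<x} else {}) + card (Star ` ({1..<x} - {i}))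
          + card (if x + 1 < n then {Pivot, Top} else {})"
      unfolding red_cells_def by (simp add: card_Un_le le_trans[OF card_Un_le] add_mono)
    also have "\<dots> \<le> (if i < m then x - m else 0) + (x - 2) + (if x + 1 < n then 2 else 0)"
      using card_image_le[of "{m..<x}" Loose] stars[of "{1..<x} - {i}"] i by (intro add_mono) auto
    also have "\<dots> \<le> 2 * (n - 3)" using i assms by auto
    finally show ?thesis using Star by simp
  next
    case Pivot
    then show ?thesis using ins[of Top] assms by (simp add: red_cells_def)
  next
    case Top
    then show ?thesis using ins[of Pivot] assms by (simp add: red_cells_def)
  qed (simp add: red_cells_def)
qed

definition stage_cell :: "nat \<Rightarrow> nat \<Rightarrow> nat set \<Rightarrow> cell" where
  "stage_cell x m v = cell_of x m (Min v) (Max v)"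

lemma stage_cell_doubleton: "a < b \<Longrightarrow> stage_cell x m {a, b} = cell_of x m a b"
  unfolding stage_cell_def by simp

definition stage :: "nat \<Rightarrow> nat \<Rightarrow> nat \<Rightarrow> nat set set set" where
  "stage n x m = label_partition (johnson_V n) (stage_cell x m)"

lemma quot_red_deg_stage_le:
  assumes "5 \<le> n" "1 \<le> m" "m \<le> x" "x < n" "U \<in> stage n x m"
  shows "quot_red_deg (johnson_E n) {} (stage n x m) U \<le> 2 * (n - 3)"
proof -
  obtain u where u: "u \<in> johnson_V n" "U = label_class (johnson_V n) (stage_cell x m) u"
    using assms(5) unfolding stage_def label_partition_def by blast
  obtain a b where ab: "u = {a, b}" "1 \<le> a" "a < b" "b \<le> n"
    using u(1) mem_johnson_V_iff by blast
  have "quot_red_deg (johnson_E n) {} (stage n x m) U \<le> card (red_cells n x m (stage_cell x m u))"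
    unfolding stage_def u(2)
  proof (rule quot_red_deg_label_partition_le[OF finite_red_cells u(1)])
    fix u1 u2 w1 w2
    assume V: "u1 \<in> johnson_V n" "u2 \<in> johnson_V n" "w1 \<in> johnson_V n" "w2 \<in> johnson_V n"
      and cells: "stage_cell x m u1 = stage_cell x m u" "stage_cell x m u2 = stage_cell x m u"
        "stage_cell x m w1 = stage_cell x m w2" "stage_cell x m w1 \<noteq> stage_cell x m u"
      and E: "{u1, w1} \<in> johnson_E n" "{u2, w2} \<notin> johnson_E n"
    obtain a1 b1 where 1: "u1 = {a1, b1}" "1 \<le> a1" "a1 < b1" "b1 \<le> n"
      using V(1) mem_johnson_V_iff by blast
    obtain a2 b2 where 2: "u2 = {a2, b2}" "1 \<le> a2" "a2 < b2" "b2 \<le> n"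
      using V(2) mem_johnson_V_iff by blast
    obtain c1 d1 where 3: "w1 = {c1, d1}" "1 \<le> c1" "c1 < d1" "d1 \<le> n"
      using V(3) mem_johnson_V_iff by blast
    obtain c2 d2 where 4: "w2 = {c2, d2}" "1 \<le> c2" "c2 < d2" "d2 \<le> n"
      using V(4) mem_johnson_V_iff by blast
    show "stage_cell x m w1 \<in> red_cells n x m (stage_cell x m u)"
      by (rule mixed_adjacency_in_red_cells[of m x n a1 b1 a2 b2 c1 d1 c2 d2])
        (use assms 1 2 3 4 V cells E in
          \<open>simp_all add: stage_cell_doubleton doubletons_mem_johnson_E_iff_pair_adj\<close>)
  qed
  also have "\<dots> \<le> 2 * (n - 3)"
    using card_red_cells_le[OF assms(1-4) ab(2-4)] ab by (simp add: stage_cell_doubleton)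
  finally show ?thesis .
qed

lemma max_red_deg_stage_le:
  assumes "5 \<le> n" "1 \<le> m" "m \<le> x" "x < n"
  shows "max_red_deg (johnson_E n) {} (stage n x m) \<le> 2 * (n - 3)"
proof (rule max_red_deg_le)
  show "finite (stage n x m)"
    unfolding stage_def by (simp add: finite_label_partition finite_johnson_V)
qed (rule quot_red_deg_stage_le[OF assms])

lemma cell_of_Suc:
  "cell_of x (Suc m) a b = (if cell_of x m a b = Loose m then Star m else cell_of x m a b)"
  unfolding cell_of_def by auto

lemma merge_stage_Suc:
  assumes "1 \<le> m" "m < x" "x < n"
  shows "merge_step (stage n x m) (stage n x (Suc m))"
  unfolding stage_def
proof (rule merge_step_label_partition_comp[where a = "{m, x}" and b = "{m, n}"
      and h = "\<lambda>c. if c = Loose m then Star m else c"])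
  show "{m, x} \<in> johnson_V n" "{m, n} \<in> johnson_V n"
    using assms by (auto intro: doubleton_mem_johnson_V)
  have "stage_cell x m {m, x} = Loose m" "stage_cell x m {m, n} = Star m"
    using assms by (simp_all add: stage_cell_doubleton cell_of_def)
  then show "stage_cell x m {m, x} \<noteq> stage_cell x m {m, n}"
    "\<And>p q. ((if p = Loose m then Star m else p) = (if q = Loose m then Star m else q)) \<longleftrightarrow>
      p = q \<or> {p, q} = {stage_cell x m {m, x}, stage_cell x m {m, n}}"
    by (auto simp: doubleton_eq_iff)
  show "stage_cell x (Suc m) u = (if stage_cell x m u = Loose m then Star m else stage_cell x m u)"
    if "u \<in> johnson_V n" for u
    using that by (auto simp: mem_johnson_V_iff stage_cell_doubleton cell_of_Suc)
qed

text \<open>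
  Loose cells do not occur at stage (x + 1, x + 1); their image is chosen only to keep the
  relabelling injective away from the merged pair {Pivot, Top}.
\<close>

fun descend_cell :: "nat \<Rightarrow> cell \<Rightarrow> cell" where
  "descend_cell x (Fixed a b) = (if b = x then Loose a else Fixed a b)"
| "descend_cell x (Loose a) = Fixed a x"
| "descend_cell x (Star a) = (if a = x then Pivot else Star a)"
| "descend_cell x Pivot = Top"
| "descend_cell x Top = Top"

lemma descend_cell_eq_iff: "descend_cell x p = descend_cell x q \<longleftrightarrow> p = q \<or> {p, q} = {Pivot, Top}"
  by (cases p; cases q) (auto simp: doubleton_eq_iff)

lemma cell_of_descend:
  "1 \<le> a \<Longrightarrow> a < b \<Longrightarrow> cell_of x 1 a b = descend_cell x (cell_of (Suc x) (Suc x) a b)"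
  unfolding cell_of_def by auto

lemma merge_stage_descend:
  assumes "1 \<le> x" "x + 3 \<le> n"
  shows "merge_step (stage n (Suc x) (Suc x)) (stage n x 1)"
  unfolding stage_def
proof (rule merge_step_label_partition_comp[where a = "{Suc x, n}" and b = "{x + 2, x + 3}"
      and h = "descend_cell x"])
  show "{Suc x, n} \<in> johnson_V n" "{x + 2, x + 3} \<in> johnson_V n"
    using assms by (auto intro: doubleton_mem_johnson_V)
  have cells: "stage_cell (Suc x) (Suc x) {Suc x, n} = Pivot"
      "stage_cell (Suc x) (Suc x) {x + 2, x + 3} = Top"
    using assms by (simp_all add: stage_cell_doubleton cell_of_def)
  then show "stage_cell (Suc x) (Suc x) {Suc x, n} \<noteq> stage_cell (Suc x) (Suc x) {x + 2, x + 3}"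
    by simp
  show "\<And>p q. descend_cell x p = descend_cell x q \<longleftrightarrow>
      p = q \<or> {p, q} =
        {stage_cell (Suc x) (Suc x) {Suc x, n}, stage_cell (Suc x) (Suc x) {x + 2, x + 3}}"
    unfolding cells by (rule descend_cell_eq_iff)
  show "stage_cell x 1 u = descend_cell x (stage_cell (Suc x) (Suc x) u)"
    if u: "u \<in> johnson_V n" for u
  proof -
    obtain a b where "u = {a, b}" "1 \<le> a" "a < b" using u mem_johnson_V_iff by blast
    then show ?thesis using cell_of_descend[of a b x] by (simp add: stage_cell_doubleton)
  qed
qed

text \<open>
  When x + 1 = n - 1 the top part is empty, so pivot and top cannot be merged; instead the last
  loose pair {x, x + 1} joins the star {x, n}, and the two become the pivot part at x. The image
  of the absent Top cell only keeps the relabelling injective.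
\<close>

fun descend_cell_top :: "nat \<Rightarrow> cell \<Rightarrow> cell" where
  "descend_cell_top x (Fixed a b) = (if b = x then Loose a else Fixed a b)"
| "descend_cell_top x (Loose a) = (if a = x then Pivot else Fixed a x)"
| "descend_cell_top x (Star a) = (if a = x then Pivot else Star a)"
| "descend_cell_top x Pivot = Top"
| "descend_cell_top x Top = Fixed x x"

lemma descend_cell_top_eq_iff:
  "descend_cell_top x p = descend_cell_top x q \<longleftrightarrow> p = q \<or> {p, q} = {Loose x, Star x}"
  by (cases p; cases q) (auto simp: doubleton_eq_iff)

lemma cell_of_descend_top:
  "1 \<le> a \<Longrightarrow> a < b \<Longrightarrow> b \<le> x + 2 \<Longrightarrow> cell_of x 1 a b = descend_cell_top x (cell_of (Suc x) x a b)"
  unfolding cell_of_def by auto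

lemma merge_stage_descend_top:
  assumes "1 \<le> x" "n = x + 2"
  shows "merge_step (stage n (Suc x) x) (stage n x 1)"
  unfolding stage_def
proof (rule merge_step_label_partition_comp[where a = "{x, Suc x}" and b = "{x, n}"
      and h = "descend_cell_top x"])
  show "{x, Suc x} \<in> johnson_V n" "{x, n} \<in> johnson_V n"
    using assms by (auto intro: doubleton_mem_johnson_V)
  have cells: "stage_cell (Suc x) x {x, Suc x} = Loose x" "stage_cell (Suc x) x {x, n} = Star x"
    using assms by (simp_all add: stage_cell_doubleton cell_of_def)
  then show "stage_cell (Suc x) x {x, Suc x} \<noteq> stage_cell (Suc x) x {x, n}"
    by simp
  show "\<And>p q. descend_cell_top x p = descend_cell_top x q \<longleftrightarrow>
      p = q \<or> {p, q} = {stage_cell (Suc x) x {x, Suc x}, stage_cell (Suc x) x {x, n}}"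
    unfolding cells by (rule descend_cell_top_eq_iff)
  show "stage_cell x 1 u = descend_cell_top x (stage_cell (Suc x) x u)"
    if u: "u \<in> johnson_V n" for u
  proof -
    obtain a b where "u = {a, b}" "1 \<le> a" "a < b" "b \<le> n" using u mem_johnson_V_iff by blast
    then show ?thesis using assms cell_of_descend_top[of a b x] by (simp add: stage_cell_doubleton)
  qed
qed

lemma merge_stage_final:
  assumes "3 \<le> n"
  shows "merge_step (stage n 1 1) {johnson_V n}"
proof -
  have "merge_step (stage n 1 1) (label_partition (johnson_V n) (\<lambda>_. ()))"
    unfolding stage_def
  proof (rule merge_step_label_partition[where a = "{1, 2}" and b = "{2, 3}"])
    show "{1, 2} \<in> johnson_V n" "{2, 3} \<in> johnson_V n"
      using assms by (auto intro: doubleton_mem_johnson_V)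
    have "stage_cell 1 1 {1, 2} = Pivot" "stage_cell 1 1 {2, 3} = Top"
      by (simp_all add: stage_cell_doubleton cell_of_def)
    moreover have cells: "stage_cell 1 1 u \<in> {Pivot, Top}" if "u \<in> johnson_V n" for u
      using that by (auto simp: mem_johnson_V_iff stage_cell_doubleton cell_of_def split: if_splits)
    ultimately show "stage_cell 1 1 {1, 2} \<noteq> stage_cell 1 1 {2, 3}"
      "\<And>u v. u \<in> johnson_V n \<Longrightarrow> v \<in> johnson_V n \<Longrightarrow> () = () \<longleftrightarrow>
        stage_cell 1 1 u = stage_cell 1 1 v
        \<or> {stage_cell 1 1 u, stage_cell 1 1 v} = {stage_cell 1 1 {1, 2}, stage_cell 1 1 {2, 3}}"
      by (auto dest!: cells simp: doubleton_eq_iff)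
  qed
  moreover have "label_partition (johnson_V n) (\<lambda>_. ()) = {johnson_V n}"
    using doubleton_mem_johnson_V[of 1 2 n] assms by (intro label_partition_eq_single) auto
  ultimately show ?thesis by simp
qed

lemma stage_first: "stage n (n - 1) 1 = singleton_partition (johnson_V n)"
  unfolding stage_def
proof (intro label_partition_eq_singleton_partition inj_onI)
  fix u v assume "u \<in> johnson_V n" "v \<in> johnson_V n"
    and "stage_cell (n - 1) 1 u = stage_cell (n - 1) 1 v"
  then show "u = v"
    by (auto simp: mem_johnson_V_iff stage_cell_doubleton cell_of_def split: if_splits)
qed

primrec stage_blocks :: "nat \<Rightarrow> nat \<Rightarrow> nat set set set list" where
  "stage_blocks n 0 = []"
| "stage_blocks n (Suc x) = map (stage n (Suc x)) [1..<x + 2] @ stage_blocks n x"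

definition johnson_seq :: "nat \<Rightarrow> nat set set set list" where
  "johnson_seq n = map (stage n (n - 1)) [1..<n - 1] @ stage_blocks n (n - 2) @ [{johnson_V n}]"

lemma successively_map_upt:
  "(\<And>i. a \<le> i \<Longrightarrow> Suc i < b \<Longrightarrow> P (f i) (f (Suc i))) \<Longrightarrow> successively P (map f [a..<b])"
  by (auto simp: successively_conv_nth)

lemma hd_stage_blocks: "hd (stage_blocks n (Suc x) @ ps) = stage n (Suc x) 1"
  by (simp add: hd_map del: upt_Suc)

lemma successively_stage_blocks:
  assumes "1 \<le> k" "k + 2 \<le> n"
  shows "successively merge_step (stage_blocks n k @ [{johnson_V n}])"
  using assms
proof (induction k)
  case (Suc k)
  let ?block = "map (stage n (Suc k)) [1..<k + 2]"
  show ?case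
  proof (cases "k = 0")
    case True
    then show ?thesis using merge_stage_final[of n] Suc.prems by simp
  next
    case False
    have block: "successively merge_step ?block"
      using Suc.prems by (intro successively_map_upt merge_stage_Suc) auto
    have last: "last ?block = stage n (Suc k) (Suc k)" by (simp add: last_map)
    have next_block: "merge_step (stage n (Suc k) (Suc k)) (stage n k 1)"
      using Suc.prems False by (intro merge_stage_descend) auto
    obtain j where "k = Suc j" using False not0_implies_Suc by blast
    then have "hd (stage_blocks n k @ [{johnson_V n}]) = stage n k 1"
      by (simp only: hd_stage_blocks)
    then show ?thesis
      unfolding stage_blocks.simps successively_append_iff[of _ ?block] append_assoc
      using block last next_block Suc False by simp
  qed
qed simp

lemma mem_stage_blocks:
  "P \<in> set (stage_blocks n k) \<Longrightarrow> \<exists>x m. P = stage n x m \<and> 1 \<le> m \<and> m \<le> x \<and> x \<le> k"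
proof (induction k)
  case (Suc k)
  show ?case
  proof (cases "P \<in> set (stage_blocks n k)")
    case True
    then obtain x m where "P = stage n x m" "1 \<le> m" "m \<le> x" "x \<le> k" using Suc.IH by blast
    then show ?thesis by (intro exI[of _ x] exI[of _ m]) simp
  next
    case False
    then obtain m where "P = stage n (Suc k) m" "1 \<le> m" "m \<le> Suc k" using Suc.prems by auto
    then show ?thesis by blast
  qed
qed simp

lemma length_stage_blocks: "2 * length (stage_blocks n k) = k * (k + 1)"
  by (induction k) (auto simp: algebra_simps)

lemma contraction_seq_johnson_seq:
  assumes "3 \<le> n"
  shows "contraction_seq (johnson_V n) (johnson_seq n)"
proof (rule contraction_seqI)
  let ?first = "map (stage n (n - 1)) [1..<n - 1]"
    and ?rest = "stage_blocks n (n - 2) @ [{johnson_V n}]"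
  have n1: "n - 1 = Suc (n - 2)" and n2: "n - 2 = Suc (n - 3)" using assms by simp_all
  show "johnson_seq n \<noteq> []" unfolding johnson_seq_def by simp
  show "hd (johnson_seq n) = singleton_partition (johnson_V n)"
    using assms stage_first[of n] unfolding johnson_seq_def
    by (simp add: hd_map del: upt_Suc stage_blocks.simps)
  have "successively merge_step ?first"
    using assms by (intro successively_map_upt merge_stage_Suc) auto
  moreover have "successively merge_step ?rest"
    using assms by (intro successively_stage_blocks) auto
  moreover have "merge_step (last ?first) (hd ?rest)"
  proof -
    have "last ?first = stage n (Suc (n - 2)) (n - 2)"
      using assms n1 by (simp add: last_map del: upt_Suc)
    moreover have "hd ?rest = stage n (n - 2) 1"
      unfolding n2 by (rule hd_stage_blocks)
    ultimately show ?thesis using assms merge_stage_descend_top[of "n - 2" n] by simp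
  qed
  ultimately show "successively merge_step (johnson_seq n)"
    unfolding johnson_seq_def successively_append_iff[of _ ?first] by blast
  obtain k where k: "n = k + 3" using assms by (metis add.commute le_Suc_ex)
  have "2 * length (johnson_seq n) = 2 * (k + 1) + (k + 1) * (k + 2) + 2"
    unfolding johnson_seq_def using length_stage_blocks[of n "k + 1"] k
    by (simp del: upt_Suc stage_blocks.simps)
  also have "\<dots> = n * (n - 1)" unfolding k by (simp add: algebra_simps)
  finally show "length (johnson_seq n) = card (johnson_V n)"
    unfolding card_johnson_V choose_two by simp
qed

lemma seq_width_johnson_seq_le:
  assumes "5 \<le> n"
  shows "seq_width (johnson_E n) {} (johnson_seq n) \<le> 2 * (n - 3)"
proof -
  have "max_red_deg (johnson_E n) {} P \<le> 2 * (n - 3)" if P: "P \<in> set (johnson_seq n)" for P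
  proof -
    consider (first) m where "P = stage n (n - 1) m" "1 \<le> m" "m < n - 1"
      | (blocks) "P \<in> set (stage_blocks n (n - 2))" | (final) "P = {johnson_V n}"
      using P unfolding johnson_seq_def by (auto simp del: upt_Suc stage_blocks.simps)
    then show ?thesis
    proof cases
      case first
      then show ?thesis using max_red_deg_stage_le[OF assms] by simp
    next
      case blocks
      then obtain x m where "P = stage n x m" "1 \<le> m" "m \<le> x" "x \<le> n - 2"
        using mem_stage_blocks by blast
      then show ?thesis using max_red_deg_stage_le[OF assms] assms by simp
    next
      case final
      then show ?thesis by (simp add: max_red_deg_single)
    qed
  qed
  then show ?thesis unfolding seq_width_def by simp
qed

section \<open>Small Johnson graphs\<close>

lemma johnson_V_subsetI:
  "(\<And>a b. 1 \<le> a \<Longrightarrow> a < b \<Longrightarrow> b \<le> n \<Longrightarrow> {a, b} \<in> S) \<Longrightarrow> johnson_V n \<subseteq> S"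
  by (auto simp: mem_johnson_V_iff)

lemma johnson_V_2: "johnson_V 2 = {{1, 2}}"
proof
  show "johnson_V 2 \<subseteq> {{1, 2}}"
  proof (rule johnson_V_subsetI)
    fix a b :: nat assume "1 \<le> a" "a < b" "b \<le> 2"
    then have "a = 1 \<and> b = 2" by arith
    then show "{a, b} \<in> {{1, 2}}" by simp
  qed
qed (simp add: doubleton_mem_johnson_V)

lemma johnson_V_3: "johnson_V 3 = {{1, 2}, {1, 3}, {2, 3}}"
proof
  show "johnson_V 3 \<subseteq> {{1, 2}, {1, 3}, {2, 3}}"
  proof (rule johnson_V_subsetI)
    fix a b :: nat assume "1 \<le> a" "a < b" "b \<le> 3"
    then have "a = 1 \<and> b = 2 \<or> a = 1 \<and> b = 3 \<or> a = 2 \<and> b = 3" by arith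
    then show "{a, b} \<in> {{1, 2}, {1, 3}, {2, 3}}" by (elim disjE) simp_all
  qed
qed (simp add: doubleton_mem_johnson_V)

lemma johnson_V_4: "johnson_V 4 = {{1, 2}, {3, 4}, {1, 3}, {2, 4}, {1, 4}, {2, 3}}"
proof
  show "johnson_V 4 \<subseteq> {{1, 2}, {3, 4}, {1, 3}, {2, 4}, {1, 4}, {2, 3}}"
  proof (rule johnson_V_subsetI)
    fix a b :: nat assume "1 \<le> a" "a < b" "b \<le> 4"
    then have "a = 1 \<and> b = 2 \<or> a = 3 \<and> b = 4 \<or> a = 1 \<and> b = 3 \<or> a = 2 \<and> b = 4
      \<or> a = 1 \<and> b = 4 \<or> a = 2 \<and> b = 3" by arith
    then show "{a, b} \<in> {{1, 2}, {3, 4}, {1, 3}, {2, 4}, {1, 4}, {2, 3}}" by (elim disjE) simp_all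
  qed
qed (simp add: doubleton_mem_johnson_V)

lemma contraction_seq_johnson_2: "contraction_seq (johnson_V 2) [{johnson_V 2}]"
  by (rule contraction_seqI) (simp_all add: johnson_V_2 singleton_partition_def)

lemma johnson_E_3_complete:
  "u \<in> johnson_V 3 \<Longrightarrow> w \<in> johnson_V 3 \<Longrightarrow> u \<noteq> w \<Longrightarrow> {u, w} \<in> johnson_E 3"
  unfolding doubleton_mem_johnson_E_iff johnson_V_3 by (auto simp: doubleton_eq_iff)

lemma seq_width_johnson_seq_3: "seq_width (johnson_E 3) {} (johnson_seq 3) = 0"
proof -
  have "max_red_deg (johnson_E 3) {} P = 0" if "P \<in> set (johnson_seq 3)" for P
  proof (rule max_red_deg_eq_0)
    show P: "partition_on (johnson_V 3) P"
      using contraction_seq_johnson_seq[of 3] that unfolding contraction_seq_def by simp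
    show "is_singleton U \<or> (\<forall>u\<in>U. \<forall>w\<in>johnson_V 3 - U. {u, w} \<in> johnson_E 3)" if "U \<in> P" for U
      using partition_onD1[OF P] that johnson_E_3_complete by blast
  qed
  then show ?thesis unfolding seq_width_def by (simp add: image_constant_conv)
qed

text \<open>
  J(4,2) is the octahedron: a vertex is non-adjacent only to its complement. Merging the
  complementary pairs first keeps every quotient free of red edges.
\<close>

definition octahedron_seq :: "nat set set set list" where
  "octahedron_seq =
    [(\<lambda>v. {v}) ` {{1, 2}, {3, 4}, {1, 3}, {2, 4}, {1, 4}, {2, 3}},
     insert {{1, 2}, {3, 4}} ((\<lambda>v. {v}) ` {{1, 3}, {2, 4}, {1, 4}, {2, 3}}),
     {{{1, 2}, {3, 4}}, {{1, 3}, {2, 4}}, {{1, 4}}, {{2, 3}}},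
     {{{1, 2}, {3, 4}}, {{1, 3}, {2, 4}}, {{1, 4}, {2, 3}}},
     {{{1, 2}, {3, 4}, {1, 3}, {2, 4}}, {{1, 4}, {2, 3}}},
     {johnson_V 4}]"

lemma contraction_seq_octahedron_seq: "contraction_seq (johnson_V 4) octahedron_seq"
proof (rule contraction_seqI)
  show "octahedron_seq \<noteq> []" "length octahedron_seq = card (johnson_V 4)"
    unfolding octahedron_seq_def card_johnson_V by (simp_all add: choose_two)
  show "hd octahedron_seq = singleton_partition (johnson_V 4)"
    unfolding octahedron_seq_def singleton_partition_def johnson_V_4 by simp
  have "merge_step ((\<lambda>v. {v}) ` {{1, 2}, {3, 4}, {1, 3}, {2, 4}, {1, 4}, {2, 3 :: nat}})
      (insert {{1, 2}, {3, 4}} ((\<lambda>v. {v}) ` {{1, 3}, {2, 4}, {1, 4}, {2, 3}}))"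
    by (rule merge_stepI[of "{{1, 2}}" _ "{{3, 4}}"]) (auto simp: doubleton_eq_iff)
  moreover have
    "merge_step (insert {{1, 2}, {3, 4 :: nat}} ((\<lambda>v. {v}) ` {{1, 3}, {2, 4}, {1, 4}, {2, 3}}))
      {{{1, 2}, {3, 4}}, {{1, 3}, {2, 4}}, {{1, 4}}, {{2, 3}}}"
    by (rule merge_stepI[of "{{1, 3}}" _ "{{2, 4}}"]) (auto simp: doubleton_eq_iff)
  moreover have "merge_step {{{1, 2}, {3, 4 :: nat}}, {{1, 3}, {2, 4}}, {{1, 4}}, {{2, 3}}}
      {{{1, 2}, {3, 4}}, {{1, 3}, {2, 4}}, {{1, 4}, {2, 3}}}"
    by (rule merge_stepI[of "{{1, 4}}" _ "{{2, 3}}"]) (auto simp: doubleton_eq_iff)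
  moreover have "merge_step {{{1, 2}, {3, 4 :: nat}}, {{1, 3}, {2, 4}}, {{1, 4}, {2, 3}}}
      {{{1, 2}, {3, 4}, {1, 3}, {2, 4}}, {{1, 4}, {2, 3}}}"
    by (rule merge_stepI[of "{{1, 2}, {3, 4}}" _ "{{1, 3}, {2, 4}}"]) (auto simp: doubleton_eq_iff)
  moreover have "merge_step {{{1, 2}, {3, 4 :: nat}, {1, 3}, {2, 4}}, {{1, 4}, {2, 3}}}
      {johnson_V 4}"
  proof (rule merge_stepI[of "{{1, 2}, {3, 4}, {1, 3}, {2, 4}}" _ "{{1, 4}, {2, 3}}"])
    have "{1, 2} \<notin> {{1, 4}, {2, 3 :: nat}}" by (simp add: doubleton_eq_iff)
    then show "{{1, 2}, {3, 4}, {1, 3}, {2, 4}} \<noteq> {{1, 4}, {2, 3 :: nat}}" by (metis insertI1)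
  qed (auto simp: doubleton_eq_iff johnson_V_4)
  ultimately show "successively merge_step octahedron_seq"
    unfolding octahedron_seq_def successively.simps by blast
qed

lemma seq_width_octahedron_seq: "seq_width (johnson_E 4) {} octahedron_seq = 0"
proof -
  have parts: "\<forall>U\<in>P. is_singleton U \<or> (\<forall>u\<in>U. \<forall>w\<in>johnson_V 4 - U. {u, w} \<in> johnson_E 4)"
    if "P \<in> set octahedron_seq" for P
    using that unfolding octahedron_seq_def
    by (simp only: list.set insert_iff empty_iff)
      (elim disjE;
        simp add: johnson_V_4 doubleton_mem_johnson_E_iff doubleton_eq_iff insert_Diff_if)
  have "max_red_deg (johnson_E 4) {} P = 0" if P: "P \<in> set octahedron_seq" for P
  proof (rule max_red_deg_eq_0)
    show "partition_on (johnson_V 4) P"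
      using contraction_seq_octahedron_seq P unfolding contraction_seq_def by simp
  qed (use parts[OF P] in blast)
  then show ?thesis unfolding seq_width_def by (simp add: image_constant_conv)
qed

lemma johnson_contraction_seq:
  assumes "2 \<le> n"
  obtains ps where "contraction_seq (johnson_V n) ps"
    and "seq_width (johnson_E n) {} ps \<le> (if 5 \<le> n then 2 * (n - 3) else 0)"
proof -
  consider "n = 2" | "n = 3" | "n = 4" | "5 \<le> n" using assms by linarith
  then show ?thesis
  proof cases
    case 1
    with that[of "[{johnson_V 2}]"] show ?thesis
      by (simp add: contraction_seq_johnson_2 seq_width_def max_red_deg_single)
  next
    case 2
    with that[of "johnson_seq 3"] show ?thesis
      by (simp add: contraction_seq_johnson_seq seq_width_johnson_seq_3)
  next
    case 3
    with that[of octahedron_seq] show ?thesis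
      by (simp add: contraction_seq_octahedron_seq seq_width_octahedron_seq)
  next
    case 4
    with that[of "johnson_seq n"] show ?thesis
      by (simp add: contraction_seq_johnson_seq seq_width_johnson_seq_le)
  qed
qed

theorem mainTheorem6:
  fixes n :: nat
  assumes "n \<ge> 2"
  shows "tww (johnson_V n) (johnson_E n) {} = lb1 (johnson_V n) (johnson_E n) {}
       \<and> lb1 (johnson_V n) (johnson_E n) {} = (if n \<ge> 5 then 2 * (n - 3) else 0)"
proof -
  obtain ps where ps: "contraction_seq (johnson_V n) ps"
    and width: "seq_width (johnson_E n) {} ps \<le> (if 5 \<le> n then 2 * (n - 3) else 0)"
    using johnson_contraction_seq[OF assms] .
  have "tww (johnson_V n) (johnson_E n) {} \<le> (if 5 \<le> n then 2 * (n - 3) else 0)"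
    using tww_le[OF ps] width by (rule order.trans)
  moreover have "lb1 (johnson_V n) (johnson_E n) {} \<le> tww (johnson_V n) (johnson_E n) {}"
    by (rule lb1_le_tww[OF finite_johnson_V ps])
  moreover have "5 \<le> n \<Longrightarrow> 2 * (n - 3) \<le> lb1 (johnson_V n) (johnson_E n) {}"
    by (rule lb1_johnson_ge)
  ultimately show ?thesis by (auto split: if_splits)
qed

end
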